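(* Let $(X,d)$ be a compact metric space of finite covering dimension, $f_{0,\infty}=\{f_n\}_{n=0}^\infty$ a sequence of continuous self-maps of $X$, and $\mu$ a Borel probability measure on $X$ that is $f_{0,\infty}$-invariant. Then for any $A\in\mathcal{S}$, $h_{A}(f_{0,\infty})\geq h_{A,\mu}(f_{0,\infty})$.
   Context: $f_i^n=f_{i+n-1}\circ\cdots\circ f_i$, $f_i^0=\mathrm{id}$, $f_i^{-n}(B)=(f_i^n)^{-1}(B)$. $\mathcal S$ is the set of strictly increasing sequences $A=\{a_i\}_{i\ge1}$ of nonnegative integers. Topological sequence entropy: $h_A(f_{0,\infty})=\sup_{\mathscr A}\limsup_{n\to\infty}\frac1n\log\mathcal N(\bigvee_{i=1}^n f_0^{-a_i}\mathscr A)$ over finite open covers $\mathscr A$, where $\bigvee$ denotes common refinement, $f_0^{-a}\mathscr A=\{f_0^{-a}U:U\in\mathscr A\}$, $\mathcal N$ the minimal cardinality of a subcover, and $\log$ the natural logarithm. $\mu$ is $f_{0,\infty}$-invariant if $\mu(f_n^{-1}B)=\mu(B)$ for all Borel $B$ and $n\ge0$. Measure-theoretic sequence entropy: for a finite Borel partition $\xi$, $h_{A,\mu}(f_{0,\infty},\xi)=\limsup_{n\to\infty}\frac1nH_\mu(\bigvee_{i=1}^n f_0^{-a_i}\xi)$ with $H_\mu(\eta)=-\sum_{C\in\eta}\mu(C)\ln\mu(C)$, and $h_{A,\mu}(f_{0,\infty})=\sup_\xi h_{A,\mu}(f_{0,\infty},\xi)$ over finite Borel partitions. *)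

theory Defs
  imports "HOL-Probability.Probability"
begin

fun fcomp :: "(nat \<Rightarrow> 'a \<Rightarrow> 'a) \<Rightarrow> nat \<Rightarrow> nat \<Rightarrow> 'a \<Rightarrow> 'a" where
  "fcomp f i 0 = id"
| "fcomp f i (Suc n) = f (i + n) \<circ> fcomp f i n"

definition finite_open_cover :: "'a::topological_space set set \<Rightarrow> bool" where
  "finite_open_cover \<U> \<longleftrightarrow> finite \<U> \<and> (\<forall>U\<in>\<U>. open U) \<and> \<Union>\<U> = UNIV"

definition covering_dim_le :: "nat \<Rightarrow> 'a::topological_space itself \<Rightarrow> bool" where
  "covering_dim_le n _ \<longleftrightarrow>
     (\<forall>\<U>::'a set set. finite_open_cover \<U> \<longrightarrow>
        (\<exists>\<V>. finite_open_cover \<V> \<and> (\<forall>V\<in>\<V>. \<exists>U\<in>\<U>. V \<subseteq> U)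
             \<and> (\<forall>x. card {V\<in>\<V>. x \<in> V} \<le> n + 1)))"

definition finite_covering_dim :: "'a::topological_space itself \<Rightarrow> bool" where
  "finite_covering_dim T \<longleftrightarrow> (\<exists>n. covering_dim_le n T)"

definition join_fam :: "(nat \<Rightarrow> 'a set set) \<Rightarrow> nat set \<Rightarrow> 'a set set" where
  "join_fam C I = {\<Inter>i\<in>I. U i | U. \<forall>i\<in>I. U i \<in> C i}"

definition preimage_coll :: "('a \<Rightarrow> 'a) \<Rightarrow> 'a set set \<Rightarrow> 'a set set" where
  "preimage_coll g \<A> = (\<lambda>U. g -` U) ` \<A>"

definition min_subcover_card :: "'a set set \<Rightarrow> nat" where
  "min_subcover_card \<C> = Min {card \<V> | \<V>. \<V> \<subseteq> \<C> \<and> \<Union>\<V> = UNIV}"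

text \<open>Topological sequence entropy h_A(f_{0,\<infinity>}), sequence a indexed from 1.\<close>
definition top_seq_entropy :: "(nat \<Rightarrow> nat) \<Rightarrow> (nat \<Rightarrow> 'a::topological_space \<Rightarrow> 'a) \<Rightarrow> ereal" where
  "top_seq_entropy a f =
     (SUP \<A>\<in>{\<A>. finite_open_cover \<A>}.
        limsup (\<lambda>n. ereal (ln (real (min_subcover_card
           (join_fam (\<lambda>i. preimage_coll (fcomp f 0 (a i)) \<A>) {1..n}))) / real n)))"

definition finite_borel_partition :: "'a::topological_space set set \<Rightarrow> bool" where
  "finite_borel_partition \<xi> \<longleftrightarrow> finite \<xi> \<and> (\<forall>C\<in>\<xi>. C \<in> sets borel \<and> C \<noteq> {})
     \<and> disjoint \<xi> \<and> \<Union>\<xi> = UNIV"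

definition part_entropy :: "'a measure \<Rightarrow> 'a set set \<Rightarrow> real" where
  "part_entropy \<mu> \<eta> = - (\<Sum>C\<in>\<eta>. measure \<mu> C * ln (measure \<mu> C))"

definition meas_seq_entropy :: "(nat \<Rightarrow> nat) \<Rightarrow> 'a::topological_space measure \<Rightarrow> (nat \<Rightarrow> 'a \<Rightarrow> 'a) \<Rightarrow> ereal" where
  "meas_seq_entropy a \<mu> f =
     (SUP \<xi>\<in>{\<xi>. finite_borel_partition \<xi>}.
        limsup (\<lambda>n. ereal (part_entropy \<mu>
           (join_fam (\<lambda>i. preimage_coll (fcomp f 0 (a i)) \<xi>) {1..n}) / real n)))"

end

theory Submission
  imports Defs
begin

text \<open>
  Fix a finite Borel partition \<xi> and \<epsilon> > 0. By inner regularity every cell C contains a closed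
  core B C such that C - B C has small measure; then B0 = - (\<Union>C\<in>\<xi>. B C) has small measure and
  the sets B0 \<union> B C form a finite open cover \<U>. For points in the same member of a minimal
  subcover of the join of the pull-backs of \<U>, the \<xi>-cells along the orbit are determined by the
  cells of \<zeta> = {B0 \<inter> C | C \<in> \<xi>} \<union> {- B0} along the orbit. Hence the entropy of the join of
  n pull-backs of \<xi> is at most log N(join of the pull-backs of \<U>) + n H(\<zeta>), invariance of the
  measure giving each pull-back of \<zeta> the entropy H(\<zeta>), and H(\<zeta>) is small together with the
  measure of B0. Dividing by n and letting \<epsilon> tend to 0 gives the inequality.
\<close>

section \<open>Inner regularity of finite Borel measures\<close>

definition closed_open_regular :: "'a::topological_space measure \<Rightarrow> 'a set \<Rightarrow> bool" where
  "closed_open_regular M B \<longleftrightarrow>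
     (\<forall>e>0. \<exists>F G. closed F \<and> open G \<and> F \<subseteq> B \<and> B \<subseteq> G \<and> measure M (G - F) < e)"

lemma closed_open_regular_closed:
  fixes M :: "'a::metric_space measure"
  assumes "finite_measure M" and sets_M: "sets M = sets borel" and "closed A"
  shows "closed_open_regular M A"
  unfolding closed_open_regular_def
proof (intro allI impI)
  interpret finite_measure M by fact
  fix e :: real assume "e > 0"
  define G where "G n = (\<Union>a\<in>A. ball a (1 / Suc n))" for n :: nat
  have open_G: "open (G n)" for n
    unfolding G_def by auto
  have A_sub_G: "A \<subseteq> G n" for n
    unfolding G_def by force
  have "G n \<subseteq> G m" if "m \<le> n" for m n
    unfolding G_def using that by (intro UN_mono subset_ball) (auto simp: frac_le)
  then have "decseq G"
    unfolding decseq_def by blast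
  moreover have "(\<Inter>n. G n) = A"
  proof (intro equalityI subsetI)
    fix x assume x: "x \<in> (\<Inter>n. G n)"
    have "\<exists>y\<in>A. dist y x < r" if "r > 0" for r
    proof -
      obtain n where "1 / Suc n < r" using \<open>r > 0\<close> nat_approx_posE by blast
      moreover obtain y where "y \<in> A" "dist y x < 1 / Suc n"
        using x unfolding G_def by auto
      ultimately show ?thesis by (meson order.strict_trans)
    qed
    then show "x \<in> A" using closed_approachable[OF \<open>closed A\<close>] by blast
  qed (use A_sub_G in auto)
  moreover have "range G \<subseteq> sets M"
    using open_G sets_M by auto
  ultimately have "(\<lambda>n. measure M (G n)) \<longlonglongrightarrow> measure M A"
    using finite_Lim_measure_decseq[of G] by simp
  then have "eventually (\<lambda>n. measure M (G n) < measure M A + e) sequentially"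
    using \<open>e > 0\<close> by (intro order_tendstoD) auto
  then obtain n where "measure M (G n) < measure M A + e"
    using eventually_sequentially by auto
  moreover have "measure M (G n - A) = measure M (G n) - measure M A"
    using open_G A_sub_G \<open>closed A\<close> sets_M by (intro finite_measure_Diff) auto
  ultimately show "\<exists>F G. closed F \<and> open G \<and> F \<subseteq> A \<and> A \<subseteq> G \<and> measure M (G - F) < e"
    using open_G A_sub_G \<open>closed A\<close> by (intro exI[of _ A, OF exI[of _ "G n"]] conjI) auto
qed

lemma closed_open_regular_Compl:
  assumes "closed_open_regular M B"
  shows "closed_open_regular M (- B)"
  unfolding closed_open_regular_def
proof (intro allI impI)
  fix e :: real assume "e > 0"
  then obtain F G where FG: "closed F" "open G" "F \<subseteq> B" "B \<subseteq> G" "measure M (G - F) < e"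
    using assms unfolding closed_open_regular_def by meson
  have "- F - - G = G - F" by blast
  then show "\<exists>F' G'. closed F' \<and> open G' \<and> F' \<subseteq> - B \<and> - B \<subseteq> G' \<and> measure M (G' - F') < e"
    using FG by (intro exI[of _ "- G", OF exI[of _ "- F"]] conjI) (auto simp: closed_Compl open_Compl)
qed

context finite_measure
begin

lemma obtain_UN_lessThan_approx:
  fixes A :: "nat \<Rightarrow> 'a set"
  assumes "range A \<subseteq> sets M" "e > 0"
  obtains N where "measure M ((\<Union>i. A i) - (\<Union>i<N. A i)) < e"
proof -
  have "incseq (\<lambda>N. \<Union>i<N. A i)"
    by (intro monoI UN_mono) auto
  then have "(\<lambda>N. measure M (\<Union>i<N. A i)) \<longlonglongrightarrow> measure M (\<Union>N. \<Union>i<N. A i)"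
    using assms(1) by (intro finite_Lim_measure_incseq) auto
  moreover have "(\<Union>N. \<Union>i<N. A i) = (\<Union>i. A i)"
    by blast
  ultimately have "eventually (\<lambda>N. measure M (\<Union>i. A i) - e < measure M (\<Union>i<N. A i)) sequentially"
    using \<open>e > 0\<close> by (intro order_tendstoD) auto
  then obtain N where "measure M (\<Union>i. A i) - e < measure M (\<Union>i<N. A i)"
    using eventually_sequentially by auto
  moreover have "measure M ((\<Union>i. A i) - (\<Union>i<N. A i)) = measure M (\<Union>i. A i) - measure M (\<Union>i<N. A i)"
    using assms(1) by (intro finite_measure_Diff) auto
  ultimately show thesis
    using that[of N] by linarith
qed

lemma measure_UN_le_suminf:
  fixes A :: "nat \<Rightarrow> 'a set"
  assumes "range A \<subseteq> sets M" "\<And>i. measure M (A i) \<le> d i" "summable d"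
  shows "measure M (\<Union>i. A i) \<le> (\<Sum>i. d i)"
proof -
  have "summable (\<lambda>i. measure M (A i))"
    by (rule summable_comparison_test'[OF assms(3)]) (simp add: assms(2))
  then have "measure M (\<Union>i. A i) \<le> (\<Sum>i. measure M (A i))"
    using assms(1) by (intro finite_measure_subadditive_countably) auto
  also have "\<dots> \<le> (\<Sum>i. d i)"
    by (rule suminf_le[OF assms(2) \<open>summable (\<lambda>i. measure M (A i))\<close> assms(3)])
  finally show ?thesis .
qed

end

lemma UN_diff_UN_lessThan_subset:
  assumes "\<And>i. F i \<subseteq> A i" "\<And>i. A i \<subseteq> G i"
  shows "(\<Union>i. G i) - (\<Union>i<N. F i) \<subseteq> (\<Union>i. G i - F i) \<union> ((\<Union>i. A i) - (\<Union>i<N. A i))"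
proof
  fix x assume x: "x \<in> (\<Union>i. G i) - (\<Union>i<N. F i)"
  then obtain i where "x \<in> G i" by blast
  show "x \<in> (\<Union>i. G i - F i) \<union> ((\<Union>i. A i) - (\<Union>i<N. A i))"
  proof (cases "x \<in> (\<Union>i<N. A i)")
    case True
    then obtain j where "j < N" "x \<in> A j" by blast
    then have "x \<in> G j - F j" using assms(2) x by auto
    then show ?thesis by blast
  next
    case False
    then show ?thesis using assms(1) \<open>x \<in> G i\<close> by blast
  qed
qed

lemma closed_open_regular_UN:
  fixes M :: "'a::metric_space measure" and A :: "nat \<Rightarrow> 'a set"
  assumes "finite_measure M" and sets_M: "sets M = sets borel"
    and A_borel: "\<And>i. A i \<in> sets borel" and A_regular: "\<And>i. closed_open_regular M (A i)"
  shows "closed_open_regular M (\<Union>i. A i)"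
  unfolding closed_open_regular_def
proof (intro allI impI)
  interpret finite_measure M by fact
  fix e :: real assume "e > 0"
  have A_sets: "A i \<in> sets M" for i
    using A_borel sets_M by simp
  have "range A \<subseteq> sets M" "e / 2 > 0"
    using A_sets \<open>e > 0\<close> by auto
  then obtain N where tail: "measure M ((\<Union>i. A i) - (\<Union>i<N. A i)) < e / 2"
    by (rule obtain_UN_lessThan_approx)
  define d where "d i = e / 4 * (1 / 2) ^ i" for i :: nat
  have d_sums: "d sums (e / 2)"
    unfolding d_def using sums_mult[OF geometric_sums[of "1 / 2 :: real"], of "e / 4"] by simp
  have "d i > 0" for i
    using \<open>e > 0\<close> by (simp add: d_def)
  then have "\<forall>i. \<exists>F G. closed F \<and> open G \<and> F \<subseteq> A i \<and> A i \<subseteq> G \<and> measure M (G - F) < d i"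
    using A_regular unfolding closed_open_regular_def by meson
  then obtain F G where FG: "\<And>i. closed (F i)" "\<And>i. open (G i)" "\<And>i. F i \<subseteq> A i"
      "\<And>i. A i \<subseteq> G i" and small: "\<And>i. measure M (G i - F i) < d i"
    by metis
  have gaps_sets: "G i - F i \<in> sets M" for i
    using FG(1,2) sets_M by auto
  have gaps: "measure M (\<Union>i. G i - F i) \<le> e / 2"
    using measure_UN_le_suminf[of "\<lambda>i. G i - F i" d] gaps_sets small d_sums
    by (simp add: image_subset_iff sums_iff less_imp_le)
  have "(\<Union>i. G i) - (\<Union>i<N. F i) \<subseteq> (\<Union>i. G i - F i) \<union> ((\<Union>i. A i) - (\<Union>i<N. A i))"
    using FG(3,4) by (rule UN_diff_UN_lessThan_subset)
  then have "measure M ((\<Union>i. G i) - (\<Union>i<N. F i))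
      \<le> measure M ((\<Union>i. G i - F i) \<union> ((\<Union>i. A i) - (\<Union>i<N. A i)))"
    using gaps_sets A_sets by (intro finite_measure_mono) auto
  also have "\<dots> \<le> measure M (\<Union>i. G i - F i) + measure M ((\<Union>i. A i) - (\<Union>i<N. A i))"
    using gaps_sets A_sets by (intro measure_Un_le) auto
  finally have "measure M ((\<Union>i. G i) - (\<Union>i<N. F i)) < e"
    using gaps tail by linarith
  moreover have "closed (\<Union>i<N. F i)" "open (\<Union>i. G i)"
    using FG(1,2) by auto
  moreover have "(\<Union>i<N. F i) \<subseteq> (\<Union>i. A i)" "(\<Union>i. A i) \<subseteq> (\<Union>i. G i)"
    using FG(3,4) by fastforce+
  ultimately show "\<exists>F G. closed F \<and> open G \<and> F \<subseteq> (\<Union>i. A i) \<and> (\<Union>i. A i) \<subseteq> G \<and> measure M (G - F) < e"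
    by (intro exI[of _ "\<Union>i<N. F i", OF exI[of _ "\<Union>i. G i"]] conjI)
qed

lemma closed_open_regular_borel:
  fixes M :: "'a::metric_space measure"
  assumes "finite_measure M" and sets_M: "sets M = sets borel" and "B \<in> sets borel"
  shows "closed_open_regular M B"
proof -
  have "B \<in> sigma_sets UNIV (Collect closed)"
    using \<open>B \<in> sets borel\<close> by (simp add: borel_eq_closed)
  then show ?thesis
  proof (induct rule: sigma_sets.induct)
    case (Basic A)
    then show ?case using closed_open_regular_closed[OF assms(1,2)] by simp
  next
    case Empty
    then show ?case using closed_open_regular_closed[OF assms(1,2)] by simp
  next
    case (Compl A)
    then show ?case using closed_open_regular_Compl by (simp add: Compl_eq_Diff_UNIV[symmetric])
  next
    case (Union A)
    then show ?case using closed_open_regular_UN[OF assms(1,2)] by (simp add: borel_eq_closed)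
  qed
qed

lemma borel_closed_inner_approx:
  fixes M :: "'a::metric_space measure"
  assumes "finite_measure M" and sets_M: "sets M = sets borel" and "B \<in> sets borel" and "e > 0"
  obtains F where "closed F" "F \<subseteq> B" "measure M (B - F) < e"
proof -
  interpret finite_measure M by fact
  obtain F G where FG: "closed F" "open G" "F \<subseteq> B" "B \<subseteq> G" "measure M (G - F) < e"
    using closed_open_regular_borel[OF assms(1-3)] \<open>e > 0\<close> unfolding closed_open_regular_def by meson
  have "measure M (B - F) \<le> measure M (G - F)"
    using FG sets_M by (intro finite_measure_mono) auto
  then have "measure M (B - F) < e"
    using FG by linarith
  then show thesis
    by (rule that[OF FG(1,3)])
qed

section \<open>Entropy of simple functions\<close>

lemma restrict_insert_eq_fun_upd:
  "(\<lambda>x. restrict (\<lambda>i. Y i x) (insert i I))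
     = (\<lambda>p. (fst p)(i := snd p)) \<circ> (\<lambda>x. (restrict (\<lambda>i. Y i x) I, Y i x))"
  by (auto simp: fun_eq_iff restrict_def)

context information_space
begin

lemma entropy_simple_function_sum:
  assumes X: "simple_function M X" and "X ` space M \<subseteq> S" "finite S"
  shows "\<H>(X) = - (\<Sum>v\<in>S. prob (X -` {v} \<inter> space M) * log b (prob (X -` {v} \<inter> space M)))"
proof -
  have "\<H>(X) = - (\<Sum>v\<in>X ` space M. prob (X -` {v} \<inter> space M) * log b (prob (X -` {v} \<inter> space M)))"
    by (rule entropy_simple_distributed[OF simple_distributedI[OF X measure_nonneg refl]])
  also have "(\<Sum>v\<in>X ` space M. prob (X -` {v} \<inter> space M) * log b (prob (X -` {v} \<inter> space M)))
      = (\<Sum>v\<in>S. prob (X -` {v} \<inter> space M) * log b (prob (X -` {v} \<inter> space M)))"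
  proof (rule sum.mono_neutral_left[OF \<open>finite S\<close> \<open>X ` space M \<subseteq> S\<close>], intro ballI)
    fix v assume "v \<in> S - X ` space M"
    then have "X -` {v} \<inter> space M = {}" by auto
    then show "prob (X -` {v} \<inter> space M) * log b (prob (X -` {v} \<inter> space M)) = 0" by simp
  qed
  finally show ?thesis .
qed

lemma entropy_const: "\<H>(\<lambda>x. c) = 0"
  using entropy_simple_function_sum[of "\<lambda>x. c" "{c}"] by (auto simp: prob_space)

lemma entropy_le_card_superset:
  assumes X: "simple_function M X" and "X ` space M \<subseteq> S" "finite S"
  shows "\<H>(X) \<le> log b (real (card S))"
proof -
  have "\<H>(X) \<le> log b (real (card (X ` space M)))"
    by (rule entropy_le_card[OF simple_distributedI[OF X measure_nonneg refl]])
  also have "\<dots> \<le> log b (real (card S))"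
  proof -
    have "card (X ` space M) > 0"
      using X not_empty by (auto simp: simple_function_def card_gt_0_iff)
    moreover have "card (X ` space M) \<le> card S"
      using assms(2,3) by (rule card_mono[rotated])
    ultimately show ?thesis
      using b_gt_1 by simp
  qed
  finally show ?thesis .
qed

lemma entropy_Pair_le:
  assumes "simple_function M X" "simple_function M Y"
  shows "\<H>(\<lambda>x. (X x, Y x)) \<le> \<H>(X) + \<H>(Y)"
  using entropy_chain_rule[OF assms] conditional_entropy_less_eq_entropy[OF assms(2,1)] by simp

lemma entropy_le_of_determined:
  assumes Y: "simple_function M Y" and Z: "simple_function M Z"
    and determined: "\<And>x x'. Y x = Y x' \<Longrightarrow> Z x = Z x' \<Longrightarrow> X x = X x'"
  shows "\<H>(X) \<le> \<H>(Y) + \<H>(Z)"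
proof -
  define F where "F p = X (SOME x. (Y x, Z x) = p)" for p
  have "X = F \<circ> (\<lambda>x. (Y x, Z x))"
  proof
    fix x
    have "(Y (SOME x'. (Y x', Z x') = (Y x, Z x)), Z (SOME x'. (Y x', Z x') = (Y x, Z x))) = (Y x, Z x)"
      by (rule someI[of "\<lambda>x'. (Y x', Z x') = (Y x, Z x)"]) simp
    then show "X x = (F \<circ> (\<lambda>x. (Y x, Z x))) x"
      unfolding F_def o_def by (auto intro: determined[symmetric])
  qed
  then have "\<H>(X) \<le> \<H>(\<lambda>x. (Y x, Z x))"
    using entropy_data_processing[OF simple_function_Pair[OF Y Z]] by simp
  also have "\<dots> \<le> \<H>(Y) + \<H>(Z)"
    by (rule entropy_Pair_le[OF Y Z])
  finally show ?thesis .
qed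

lemma simple_function_restrict:
  assumes "finite I" "\<And>i. i \<in> I \<Longrightarrow> simple_function M (Y i)"
  shows "simple_function M (\<lambda>x. restrict (\<lambda>i. Y i x) I)"
  using assms
proof (induction I rule: finite_induct)
  case empty
  then show ?case by simp
next
  case (insert i I)
  have "simple_function M (\<lambda>x. (restrict (\<lambda>i. Y i x) I, Y i x))"
    by (intro simple_function_Pair insert.IH insert.prems) auto
  then show ?case
    unfolding restrict_insert_eq_fun_upd by (rule simple_function_compose)
qed

lemma entropy_restrict_le_sum:
  assumes "finite I" "\<And>i. i \<in> I \<Longrightarrow> simple_function M (Y i)"
  shows "\<H>(\<lambda>x. restrict (\<lambda>i. Y i x) I) \<le> (\<Sum>i\<in>I. \<H>(Y i))"
  using assms
proof (induction I rule: finite_induct)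
  case empty
  show ?case by (simp add: entropy_const)
next
  case (insert i I)
  let ?V = "\<lambda>x. restrict (\<lambda>i. Y i x) I"
  have V: "simple_function M ?V"
    using insert by (intro simple_function_restrict) auto
  have IH: "\<H>(?V) \<le> (\<Sum>i\<in>I. \<H>(Y i))"
    by (intro insert.IH insert.prems) auto
  have "\<H>(\<lambda>x. restrict (\<lambda>i. Y i x) (insert i I)) \<le> \<H>(\<lambda>x. (?V x, Y i x))"
    unfolding restrict_insert_eq_fun_upd
    using V insert.prems by (intro entropy_data_processing simple_function_Pair) auto
  also have "\<dots> \<le> \<H>(?V) + \<H>(Y i)"
    using V insert.prems by (intro entropy_Pair_le) auto
  also have "\<dots> \<le> (\<Sum>i\<in>insert i I. \<H>(Y i))"
    using IH insert.hyps by simp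
  finally show ?case .
qed

end

lemma neg_mult_ln_le_two_sqrt:
  fixes t :: real
  assumes "0 \<le> t"
  shows "- (t * ln t) \<le> 2 * sqrt t"
proof (cases "t = 0")
  case False
  then have "t > 0" "sqrt t > 0"
    using assms by auto
  have "ln (1 / sqrt t) \<le> 1 / sqrt t - 1"
    using \<open>sqrt t > 0\<close> by (intro ln_le_minus_one) simp
  moreover have "ln (1 / sqrt t) = - ln t / 2"
    using \<open>t > 0\<close> by (simp add: ln_div ln_sqrt)
  ultimately have "- ln t \<le> 2 / sqrt t"
    by simp
  then have "t * (- ln t) \<le> t * (2 / sqrt t)"
    using \<open>t > 0\<close> by (intro mult_left_mono) auto
  also have "t * (2 / sqrt t) = 2 * sqrt t"
    using \<open>t > 0\<close> by (metis real_div_sqrt less_imp_le times_divide_eq_right mult.commute)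
  finally show ?thesis by simp
qed simp

lemma neg_mult_ln_one_minus_le:
  fixes s :: real
  assumes "0 \<le> s" "s \<le> 1"
  shows "- ((1 - s) * ln (1 - s)) \<le> s"
proof (cases "s = 1")
  case False
  then have "1 - s > 0"
    using assms by simp
  have "- ln (1 - s) = ln (1 / (1 - s))"
    using \<open>1 - s > 0\<close> by (simp add: ln_div)
  also have "\<dots> \<le> 1 / (1 - s) - 1"
    using \<open>1 - s > 0\<close> by (intro ln_le_minus_one) simp
  finally have "(1 - s) * (- ln (1 - s)) \<le> (1 - s) * (1 / (1 - s) - 1)"
    using \<open>1 - s > 0\<close> by (intro mult_left_mono) auto
  also have "\<dots> = s"
    using \<open>1 - s > 0\<close> by (simp add: field_simps)
  finally show ?thesis by simp
qed simp

lemma obtain_simple_function_cover_selection: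
  assumes "finite \<V>" "space M \<subseteq> \<Union>\<V>" "\<V> \<subseteq> sets M"
  obtains \<alpha> where "simple_function M \<alpha>" "\<And>x. x \<in> space M \<Longrightarrow> \<alpha> x \<in> \<V> \<and> x \<in> \<alpha> x"
proof -
  obtain e where e: "bij_betw e {..<card \<V>} \<V>"
    using ex_bij_betw_nat_finite[OF assms(1)] atLeast0LessThan by metis
  define idx where "idx x = (LEAST j. j < card \<V> \<and> x \<in> e j)" for x
  have idx: "idx x < card \<V> \<and> x \<in> e (idx x)" if "x \<in> space M" for x
  proof -
    obtain V where "V \<in> \<V>" "x \<in> V"
      using assms(2) \<open>x \<in> space M\<close> by blast
    then obtain j where "j < card \<V>" "x \<in> e j"
      using e by (auto simp: bij_betw_def)
    then show ?thesis
      unfolding idx_def by (rule LeastI[of "\<lambda>j. j < card \<V> \<and> x \<in> e j", OF conjI])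
  qed
  have measurable: "idx \<in> measurable M (count_space UNIV)"
    unfolding idx_def
  proof (rule measurable_Least)
    fix j
    have "{x \<in> space M. j < card \<V> \<and> x \<in> e j} \<in> sets M"
    proof (cases "j < card \<V>")
      case True
      then have "e j \<in> sets M"
        using bij_betwE[OF e] assms(3) by blast
      then have "space M \<inter> e j \<in> sets M"
        by (rule sets.Int[OF sets.top])
      moreover have "{x \<in> space M. j < card \<V> \<and> x \<in> e j} = space M \<inter> e j"
        using True by blast
      ultimately show ?thesis
        by (simp only:)
    qed simp
    then show "(\<lambda>x. j < card \<V> \<and> x \<in> e j) \<in> measurable M (count_space UNIV)"
      using pred_def by blast
  qed
  have "idx ` space M \<subseteq> {..<card \<V>}"
    using idx by auto
  then have "finite (idx ` space M)"
    by (rule finite_subset) simp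
  with measurable have "simple_function M idx"
    unfolding simple_function_def by (auto intro: measurable_sets)
  then have "simple_function M (e \<circ> idx)"
    by (rule simple_function_compose)
  moreover have "(e \<circ> idx) x \<in> \<V> \<and> x \<in> (e \<circ> idx) x" if "x \<in> space M" for x
    using idx[OF that] bij_betwE[OF e] by simp
  ultimately show thesis
    by (rule that)
qed

section \<open>Partitions, joins and closed cores\<close>

definition partition_cell :: "'a set set \<Rightarrow> 'a \<Rightarrow> 'a set" where
  "partition_cell \<xi> y = (THE C. C \<in> \<xi> \<and> y \<in> C)"

lemma partition_cell_eq:
  assumes "disjoint \<xi>" "C \<in> \<xi>" "y \<in> C"
  shows "partition_cell \<xi> y = C"
  unfolding partition_cell_def
proof (rule the_equality)
  fix C' assume "C' \<in> \<xi> \<and> y \<in> C'"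
  then show "C' = C"
    using assms by (meson disjnt_iff pairwiseD)
qed (use assms in simp)

lemma partition_cell_in:
  assumes "disjoint \<xi>" "\<Union>\<xi> = UNIV"
  shows "partition_cell \<xi> y \<in> \<xi>" and "y \<in> partition_cell \<xi> y"
proof -
  obtain C where "C \<in> \<xi>" "y \<in> C"
    using assms(2) by blast
  then show "partition_cell \<xi> y \<in> \<xi>" "y \<in> partition_cell \<xi> y"
    using partition_cell_eq[OF assms(1)] by simp_all
qed

lemma partition_cell_eq_iff:
  assumes "disjoint \<xi>" "\<Union>\<xi> = UNIV"
  shows "partition_cell \<xi> y = partition_cell \<xi> y' \<longleftrightarrow> y \<in> partition_cell \<xi> y'"
  using partition_cell_in[OF assms] partition_cell_eq[OF assms(1)] by metis

lemma vimage_partition_cell: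
  assumes "disjoint \<xi>" "\<Union>\<xi> = UNIV"
  shows "partition_cell \<xi> -` {C} = (if C \<in> \<xi> then C else {})"
  using partition_cell_eq[OF assms(1)] partition_cell_in[OF assms] by auto

lemma mem_join_fam_preimage_iff:
  "D \<in> join_fam (\<lambda>i. preimage_coll (h i) \<C>) I
     \<longleftrightarrow> (\<exists>W. (\<forall>i\<in>I. W i \<in> \<C>) \<and> D = (\<Inter>i\<in>I. h i -` W i))"
proof
  assume "D \<in> join_fam (\<lambda>i. preimage_coll (h i) \<C>) I"
  then obtain U where U: "\<forall>i\<in>I. U i \<in> (\<lambda>W. h i -` W) ` \<C>" "D = (\<Inter>i\<in>I. U i)"
    unfolding join_fam_def preimage_coll_def by blast
  then have "\<forall>i\<in>I. \<exists>W. W \<in> \<C> \<and> U i = h i -` W"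
    by blast
  from bchoice[OF this] obtain W where "\<forall>i\<in>I. W i \<in> \<C> \<and> U i = h i -` W i" ..
  then show "\<exists>W. (\<forall>i\<in>I. W i \<in> \<C>) \<and> D = (\<Inter>i\<in>I. h i -` W i)"
    using U(2) by (intro exI[of _ W]) auto
next
  assume "\<exists>W. (\<forall>i\<in>I. W i \<in> \<C>) \<and> D = (\<Inter>i\<in>I. h i -` W i)"
  then show "D \<in> join_fam (\<lambda>i. preimage_coll (h i) \<C>) I"
    unfolding join_fam_def preimage_coll_def by blast
qed

lemma finite_join_fam_preimage:
  assumes "finite I" "finite \<C>"
  shows "finite (join_fam (\<lambda>i. preimage_coll (h i) \<C>) I)"
proof -
  have "join_fam (\<lambda>i. preimage_coll (h i) \<C>) I \<subseteq> (\<lambda>W. \<Inter>i\<in>I. h i -` W i) ` (I \<rightarrow>\<^sub>E \<C>)"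
  proof
    fix D assume "D \<in> join_fam (\<lambda>i. preimage_coll (h i) \<C>) I"
    then obtain W where W: "\<forall>i\<in>I. W i \<in> \<C>" "D = (\<Inter>i\<in>I. h i -` W i)"
      unfolding mem_join_fam_preimage_iff by blast
    then have "D = (\<Inter>i\<in>I. h i -` restrict W I i)" "restrict W I \<in> I \<rightarrow>\<^sub>E \<C>"
      by simp_all
    then show "D \<in> (\<lambda>W. \<Inter>i\<in>I. h i -` W i) ` (I \<rightarrow>\<^sub>E \<C>)"
      by (rule image_eqI)
  qed
  moreover have "finite (I \<rightarrow>\<^sub>E \<C>)"
    using assms by (rule finite_PiE)
  ultimately show ?thesis
    by (rule finite_subset[OF _ finite_imageI])
qed

lemma Union_join_fam_preimage:
  assumes "\<Union>\<C> = UNIV"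
  shows "\<Union>(join_fam (\<lambda>i. preimage_coll (h i) \<C>) I) = UNIV"
proof -
  have "x \<in> \<Union>(join_fam (\<lambda>i. preimage_coll (h i) \<C>) I)" for x
  proof -
    have "\<forall>i. \<exists>W. W \<in> \<C> \<and> h i x \<in> W"
      using assms by (metis UNIV_I Union_iff)
    from choice[OF this] obtain W where W: "\<forall>i. W i \<in> \<C> \<and> h i x \<in> W i" ..
    then have "(\<Inter>i\<in>I. h i -` W i) \<in> join_fam (\<lambda>i. preimage_coll (h i) \<C>) I"
      unfolding mem_join_fam_preimage_iff by (intro exI[of _ W]) simp
    moreover have "x \<in> (\<Inter>i\<in>I. h i -` W i)"
      using W by simp
    ultimately show ?thesis
      by (rule UnionI)
  qed
  then show ?thesis
    by auto
qed

lemma open_join_fam_preimage: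
  assumes "finite I" "\<And>U. U \<in> \<C> \<Longrightarrow> open U" "\<And>i. continuous_on UNIV (h i)"
    and "D \<in> join_fam (\<lambda>i. preimage_coll (h i) \<C>) I"
  shows "open D"
proof -
  obtain W where W: "\<forall>i\<in>I. W i \<in> \<C>" "D = (\<Inter>i\<in>I. h i -` W i)"
    using assms(4) unfolding mem_join_fam_preimage_iff by blast
  show ?thesis
    unfolding W(2) using assms(1-3) W(1) by (intro open_INT) (auto intro: open_vimage)
qed

lemma obtain_min_subcover:
  assumes "finite \<C>" "\<Union>\<C> = UNIV"
  obtains \<V> where "\<V> \<subseteq> \<C>" "\<Union>\<V> = UNIV" "card \<V> = min_subcover_card \<C>"
proof -
  let ?S = "{card \<V> | \<V>. \<V> \<subseteq> \<C> \<and> \<Union>\<V> = UNIV}"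
  have "?S \<subseteq> card ` Pow \<C>"
    by auto
  then have "finite ?S"
    using assms(1) by (simp add: finite_subset)
  moreover have "card \<C> \<in> ?S"
    using assms(2) by auto
  ultimately have "Min ?S \<in> ?S"
    using Min_in by auto
  then obtain \<V> where "\<V> \<subseteq> \<C>" "\<Union>\<V> = UNIV" "card \<V> = Min ?S"
    by auto
  then show thesis
    by (intro that) (simp_all add: min_subcover_card_def)
qed

text \<open>
  In the notation of the proof idea, core_complement \<xi> B is B0 and core_label \<xi> B encodes the
  partition \<zeta> = {B0 \<inter> C | C \<in> \<xi>} \<union> {- B0}, with None naming - B0.
\<close>

definition core_complement :: "'a set set \<Rightarrow> ('a set \<Rightarrow> 'a set) \<Rightarrow> 'a set" where
  "core_complement \<xi> B = - (\<Union>C\<in>\<xi>. B C)"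

definition core_cover :: "'a set set \<Rightarrow> ('a set \<Rightarrow> 'a set) \<Rightarrow> 'a set set" where
  "core_cover \<xi> B = (\<lambda>C. core_complement \<xi> B \<union> B C) ` \<xi>"

definition core_label :: "'a set set \<Rightarrow> ('a set \<Rightarrow> 'a set) \<Rightarrow> 'a \<Rightarrow> 'a set option" where
  "core_label \<xi> B y = (if y \<in> core_complement \<xi> B then Some (partition_cell \<xi> y) else None)"

lemma core_complement_Un_core:
  assumes "disjoint \<xi>" "\<And>C. C \<in> \<xi> \<Longrightarrow> B C \<subseteq> C" "C \<in> \<xi>"
  shows "core_complement \<xi> B \<union> B C = - (\<Union>C'\<in>\<xi> - {C}. B C')"
proof -
  have "B C \<inter> B C' = {}" if "C' \<in> \<xi> - {C}" for C'
    using assms that by (metis DiffE disjnt_def disjnt_subset1 disjnt_subset2 insertI1 pairwiseD)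
  then show ?thesis
    unfolding core_complement_def by blast
qed

lemma finite_open_cover_core_cover:
  assumes "finite \<xi>" "disjoint \<xi>" "\<xi> \<noteq> {}"
    and "\<And>C. C \<in> \<xi> \<Longrightarrow> closed (B C)" "\<And>C. C \<in> \<xi> \<Longrightarrow> B C \<subseteq> C"
  shows "finite_open_cover (core_cover \<xi> B)"
  unfolding finite_open_cover_def
proof (intro conjI ballI)
  show "finite (core_cover \<xi> B)"
    using assms(1) by (simp add: core_cover_def)
next
  fix U assume "U \<in> core_cover \<xi> B"
  then obtain C where "C \<in> \<xi>" "U = core_complement \<xi> B \<union> B C"
    by (auto simp: core_cover_def)
  moreover have "closed (\<Union>C'\<in>\<xi> - {C}. B C')"
    using assms(1,4) by (intro closed_UN) auto
  ultimately show "open U"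
    using core_complement_Un_core[OF assms(2,5)] by (metis open_Compl)
next
  show "\<Union>(core_cover \<xi> B) = UNIV"
    using assms(3) unfolding core_cover_def core_complement_def by blast
qed

lemma partition_cell_eq_if_core_label_eq:
  assumes "disjoint \<xi>" "\<Union>\<xi> = UNIV" "\<And>C. C \<in> \<xi> \<Longrightarrow> B C \<subseteq> C" "C \<in> \<xi>"
    and "y \<in> core_complement \<xi> B \<union> B C" "y' \<in> core_complement \<xi> B \<union> B C"
    and "core_label \<xi> B y = core_label \<xi> B y'"
  shows "partition_cell \<xi> y = partition_cell \<xi> y'"
proof (cases "y \<in> core_complement \<xi> B")
  case True
  then show ?thesis
    using assms(7) by (auto simp: core_label_def split: if_splits)
next
  case False
  then have "y' \<notin> core_complement \<xi> B"
    using assms(7) by (auto simp: core_label_def split: if_splits)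
  then have "y \<in> C" "y' \<in> C"
    using False assms(3-6) by auto
  then show ?thesis
    using partition_cell_eq[OF assms(1,4)] by simp
qed

lemma join_fam_preimage_minus_empty:
  fixes g :: "nat \<Rightarrow> 'a \<Rightarrow> 'a" and I :: "nat set"
  assumes "disjoint \<xi>" "\<Union>\<xi> = UNIV"
  defines "X \<equiv> \<lambda>x. restrict (\<lambda>i. partition_cell \<xi> (g i x)) I"
  shows "join_fam (\<lambda>i. preimage_coll (g i) \<xi>) I - {{}} = (\<lambda>v. X -` {v}) ` range X"
proof -
  have fiber: "X -` {X x} = (\<Inter>i\<in>I. g i -` partition_cell \<xi> (g i x))" for x
    using partition_cell_eq_iff[OF assms(1,2)]
    by (auto simp: X_def restrict_def fun_eq_iff split: if_splits)
  show ?thesis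
  proof (intro equalityI subsetI)
    fix D assume D: "D \<in> join_fam (\<lambda>i. preimage_coll (g i) \<xi>) I - {{}}"
    then obtain W where W: "\<forall>i\<in>I. W i \<in> \<xi>" "D = (\<Inter>i\<in>I. g i -` W i)"
      using mem_join_fam_preimage_iff[THEN iffD1, OF DiffD1] by metis
    obtain x where "x \<in> D"
      using D by auto
    then have "partition_cell \<xi> (g i x) = W i" if "i \<in> I" for i
      using that W by (intro partition_cell_eq[OF assms(1)]) auto
    then have "D = X -` {X x}"
      unfolding fiber W(2) by (intro INF_cong) auto
    then show "D \<in> (\<lambda>v. X -` {v}) ` range X"
      by auto
  next
    fix D assume "D \<in> (\<lambda>v. X -` {v}) ` range X"
    then obtain x where D: "D = X -` {X x}"
      by auto
    have "D \<in> join_fam (\<lambda>i. preimage_coll (g i) \<xi>) I"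
      unfolding D fiber mem_join_fam_preimage_iff
      by (intro exI[of _ "\<lambda>i. partition_cell \<xi> (g i x)"]) (simp add: partition_cell_in[OF assms(1,2)])
    moreover have "x \<in> D"
      using D by simp
    ultimately show "D \<in> join_fam (\<lambda>i. preimage_coll (g i) \<xi>) I - {{}}"
      by auto
  qed
qed

lemma partition_cells_eq_if_core_labels_eq:
  assumes "disjoint \<xi>" "\<Union>\<xi> = UNIV" "\<And>C. C \<in> \<xi> \<Longrightarrow> B C \<subseteq> C"
    and "W \<in> join_fam (\<lambda>i. preimage_coll (g i) (core_cover \<xi> B)) I" "x \<in> W" "x' \<in> W"
    and "\<And>i. i \<in> I \<Longrightarrow> core_label \<xi> B (g i x) = core_label \<xi> B (g i x')"
  shows "restrict (\<lambda>i. partition_cell \<xi> (g i x)) I = restrict (\<lambda>i. partition_cell \<xi> (g i x')) I"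
proof (rule restrict_ext)
  fix i assume "i \<in> I"
  obtain U where U: "\<forall>i\<in>I. U i \<in> core_cover \<xi> B" "W = (\<Inter>i\<in>I. g i -` U i)"
    using assms(4) mem_join_fam_preimage_iff[THEN iffD1] by metis
  then obtain C where "C \<in> \<xi>" "U i = core_complement \<xi> B \<union> B C"
    using \<open>i \<in> I\<close> by (auto simp: core_cover_def)
  moreover have "g i x \<in> U i" "g i x' \<in> U i"
    using assms(5,6) U(2) \<open>i \<in> I\<close> by auto
  ultimately show "partition_cell \<xi> (g i x) = partition_cell \<xi> (g i x')"
    using assms(7)[OF \<open>i \<in> I\<close>] by (intro partition_cell_eq_if_core_label_eq[OF assms(1-3)]) auto
qed

lemma core_complement_borel:
  assumes "finite \<xi>" "\<And>C. C \<in> \<xi> \<Longrightarrow> closed (B C)"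
  shows "core_complement \<xi> B \<in> sets borel"
proof -
  have "closed (\<Union>C\<in>\<xi>. B C)"
    using assms by (intro closed_UN) auto
  then show ?thesis
    unfolding core_complement_def by (intro borel_open open_Compl)
qed

lemma partition_cell_finite_range_borel_fibers:
  assumes "finite_borel_partition \<xi>"
  shows "finite (range (partition_cell \<xi>))" "partition_cell \<xi> -` {C} \<in> sets borel"
proof -
  have "finite \<xi>" "disjoint \<xi>" "\<Union>\<xi> = UNIV" "\<And>C. C \<in> \<xi> \<Longrightarrow> C \<in> sets borel"
    using assms by (auto simp: finite_borel_partition_def)
  show "finite (range (partition_cell \<xi>))"
    using partition_cell_in[OF \<open>disjoint \<xi>\<close> \<open>\<Union>\<xi> = UNIV\<close>]
    by (intro finite_subset[OF _ \<open>finite \<xi>\<close>]) auto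
  show "partition_cell \<xi> -` {C} \<in> sets borel"
    using vimage_partition_cell[OF \<open>disjoint \<xi>\<close> \<open>\<Union>\<xi> = UNIV\<close>, of C] \<open>\<And>C. C \<in> \<xi> \<Longrightarrow> C \<in> sets borel\<close>
    by (cases "C \<in> \<xi>") auto
qed

lemma core_label_range_subset:
  assumes "disjoint \<xi>" "\<Union>\<xi> = UNIV"
  shows "range (core_label \<xi> B) \<subseteq> insert None (Some ` \<xi>)"
  using partition_cell_in[OF assms] by (auto simp: core_label_def)

lemma core_label_finite_range_borel_fibers:
  assumes \<xi>: "finite_borel_partition \<xi>" and B: "\<And>C. C \<in> \<xi> \<Longrightarrow> closed (B C)"
  shows "finite (range (core_label \<xi> B))" "core_label \<xi> B -` {v} \<in> sets borel"
proof -
  have "finite \<xi>" "disjoint \<xi>" "\<Union>\<xi> = UNIV"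
    using \<xi> by (auto simp: finite_borel_partition_def)
  then show "finite (range (core_label \<xi> B))"
    using core_label_range_subset by (metis finite_imageI finite_insert finite_subset)
  have complement: "core_complement \<xi> B \<in> sets borel"
    using \<open>finite \<xi>\<close> B by (rule core_complement_borel)
  show "core_label \<xi> B -` {v} \<in> sets borel"
  proof (cases v)
    case None
    then have "core_label \<xi> B -` {v} = - core_complement \<xi> B"
      by (intro set_eqI) (simp add: core_label_def)
    then show ?thesis
      using borel_comp[OF complement] by (simp only:)
  next
    case (Some C)
    then have "core_label \<xi> B -` {v} = core_complement \<xi> B \<inter> partition_cell \<xi> -` {C}"
      by (intro set_eqI) (simp add: core_label_def)
    then show ?thesis
      using complement partition_cell_finite_range_borel_fibers(2)[OF \<xi>] by (simp only: sets.Int)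
  qed
qed

section \<open>Sequence entropy of partitions and of open covers\<close>

lemma limsup_div_le_add:
  fixes h t :: "nat \<Rightarrow> real"
  assumes "\<And>n. h n \<le> t n + real n * \<epsilon>" "\<epsilon> \<ge> 0"
  shows "limsup (\<lambda>n. ereal (h n / real n)) \<le> limsup (\<lambda>n. ereal (t n / real n)) + ereal \<epsilon>"
proof -
  have "h n / real n \<le> t n / real n + \<epsilon>" for n
  proof (cases "n = 0")
    case False
    then have "h n / real n \<le> (t n + real n * \<epsilon>) / real n"
      using assms(1) by (intro divide_right_mono) auto
    also have "\<dots> = t n / real n + \<epsilon>"
      using False by (simp add: field_simps)
    finally show ?thesis .
  qed (use assms(2) in simp)
  then have "limsup (\<lambda>n. ereal (h n / real n)) \<le> limsup (\<lambda>n. ereal (t n / real n) + ereal \<epsilon>)"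
    by (intro Limsup_mono always_eventually) simp
  also have "\<dots> \<le> limsup (\<lambda>n. ereal (t n / real n)) + limsup (\<lambda>n. ereal \<epsilon>)"
    by (rule ereal_limsup_add_mono)
  finally show ?thesis
    by (simp add: Limsup_const)
qed

lemma continuous_on_fcomp:
  assumes "\<And>n. continuous_on UNIV (f n)"
  shows "continuous_on UNIV (fcomp f i k)"
proof (induction k)
  case (Suc k)
  then show ?case
    using continuous_on_compose[OF Suc.IH continuous_on_subset[OF assms subset_UNIV]] by simp
qed (simp add: continuous_on_id)

lemma measure_vimage_fcomp:
  assumes "\<And>n. f n \<in> borel_measurable borel"
    and "\<And>n B. B \<in> sets borel \<Longrightarrow> measure M (f n -` B) = measure M B"
    and "B \<in> sets borel"
  shows "measure M (fcomp f i k -` B) = measure M B"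
  using assms(3)
proof (induction k arbitrary: B)
  case (Suc k)
  have "f (i + k) -` B \<in> sets borel"
    using measurable_sets[OF assms(1) Suc.prems] by simp
  have "measure M (fcomp f i (Suc k) -` B) = measure M (fcomp f i k -` (f (i + k) -` B))"
    by (simp add: vimage_comp)
  also have "\<dots> = measure M (f (i + k) -` B)"
    by (rule Suc.IH) fact
  also have "\<dots> = measure M B"
    by (rule assms(2)[OF Suc.prems])
  finally show ?case .
qed simp

locale borel_entropy_space = information_space M b for M :: "'a::metric_space measure" and b +
  assumes sets_M: "sets M = sets borel" and natural_base: "b = exp 1"
begin

lemma space_M: "space M = UNIV"
  using sets_eq_imp_space_eq[OF sets_M] by simp

lemma entropy_eq_sum_ln:
  assumes "simple_function M X" "range X \<subseteq> S" "finite S"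
  shows "\<H>(X) = - (\<Sum>v\<in>S. prob (X -` {v}) * ln (prob (X -` {v})))"
  using entropy_simple_function_sum[OF assms(1) _ assms(3)] assms(2) by (simp add: space_M log_def natural_base)

lemma simple_function_borel_fibers:
  assumes "finite (range h)" "\<And>v. h -` {v} \<in> sets borel"
  shows "simple_function M h"
  unfolding simple_function_def using assms by (simp add: space_M sets_M)

lemma simple_function_borel_comp:
  assumes h: "finite (range h)" "\<And>v. h -` {v} \<in> sets borel" and g: "g \<in> borel_measurable borel"
  shows "simple_function M (\<lambda>x. h (g x))"
proof (rule simple_function_borel_fibers)
  show "finite (range (\<lambda>x. h (g x)))"
    by (rule finite_subset[OF _ h(1)]) auto
  fix v
  have "(\<lambda>x. h (g x)) -` {v} = g -` (h -` {v})"
    by auto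
  then show "(\<lambda>x. h (g x)) -` {v} \<in> sets borel"
    using measurable_sets[OF g h(2)] by simp
qed

lemma entropy_comp_measure_preserving:
  assumes h: "finite (range h)" "\<And>v. h -` {v} \<in> sets borel"
    and g: "g \<in> borel_measurable borel" "\<And>S. S \<in> sets borel \<Longrightarrow> prob (g -` S) = prob S"
  shows "\<H>(\<lambda>x. h (g x)) = \<H>(h)"
proof -
  have fibers: "(\<lambda>x. h (g x)) -` {v} = g -` (h -` {v})" for v
    by auto
  have "\<H>(\<lambda>x. h (g x)) = - (\<Sum>v\<in>range h. prob ((\<lambda>x. h (g x)) -` {v}) * ln (prob ((\<lambda>x. h (g x)) -` {v})))"
    by (rule entropy_eq_sum_ln[OF simple_function_borel_comp[OF h g(1)] _ h(1)]) auto
  also have "\<dots> = - (\<Sum>v\<in>range h. prob (h -` {v}) * ln (prob (h -` {v})))"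
    unfolding fibers using g(2)[OF h(2)] by simp
  also have "\<dots> = \<H>(h)"
    using entropy_eq_sum_ln[OF simple_function_borel_fibers[OF h] subset_refl h(1)] by simp
  finally show ?thesis .
qed

lemma part_entropy_join_eq_entropy:
  assumes \<xi>: "finite_borel_partition \<xi>" and "finite I" and g: "\<And>i. g i \<in> borel_measurable borel"
  shows "part_entropy M (join_fam (\<lambda>i. preimage_coll (g i) \<xi>) I)
    = \<H>(\<lambda>x. restrict (\<lambda>i. partition_cell \<xi> (g i x)) I)"
proof -
  have "finite \<xi>" "disjoint \<xi>" "\<Union>\<xi> = UNIV"
    using \<xi> by (auto simp: finite_borel_partition_def)
  define X where "X x = restrict (\<lambda>i. partition_cell \<xi> (g i x)) I" for x
  have X: "simple_function M X"
    unfolding X_def using \<open>finite I\<close> partition_cell_finite_range_borel_fibers[OF \<xi>] g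
    by (intro simple_function_restrict simple_function_borel_comp)
  then have "finite (range X)"
    by (simp add: simple_function_def space_M)
  have inj: "inj_on (\<lambda>v. X -` {v}) (range X)"
    by (rule inj_onI) auto
  let ?J = "join_fam (\<lambda>i. preimage_coll (g i) \<xi>) I"
  have "finite ?J"
    using \<open>finite I\<close> \<open>finite \<xi>\<close> by (rule finite_join_fam_preimage)
  then have "part_entropy M ?J = - (\<Sum>D\<in>?J - {{}}. prob D * ln (prob D))"
    unfolding part_entropy_def by (subst sum.mono_neutral_right) auto
  also have "\<dots> = - (\<Sum>v\<in>range X. prob (X -` {v}) * ln (prob (X -` {v})))"
    unfolding join_fam_preimage_minus_empty[OF \<open>disjoint \<xi>\<close> \<open>\<Union>\<xi> = UNIV\<close>] X_def[symmetric]
    by (simp add: sum.reindex[OF inj])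
  also have "\<dots> = \<H>(X)"
    using entropy_eq_sum_ln[OF X subset_refl \<open>finite (range X)\<close>] by simp
  finally show ?thesis
    unfolding X_def .
qed

lemma entropy_core_label_le:
  assumes \<xi>: "finite_borel_partition \<xi>" and B: "\<And>C. C \<in> \<xi> \<Longrightarrow> closed (B C)"
  shows "\<H>(core_label \<xi> B) \<le> (2 * card \<xi> + 1) * sqrt (prob (core_complement \<xi> B))"
proof -
  have "finite \<xi>" "disjoint \<xi>" "\<Union>\<xi> = UNIV"
    using \<xi> by (auto simp: finite_borel_partition_def)
  define p where "p = prob (core_complement \<xi> B)"
  define \<phi> where "\<phi> t = - (t * ln t)" for t :: real
  have complement: "core_complement \<xi> B \<in> sets M"
    using core_complement_borel[OF \<open>finite \<xi>\<close> B] sets_M by simp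
  have outside: "\<phi> (prob (core_label \<xi> B -` {None})) \<le> sqrt p"
  proof -
    have "core_label \<xi> B -` {None} = space M - core_complement \<xi> B"
      by (auto simp: core_label_def space_M)
    then have "\<phi> (prob (core_label \<xi> B -` {None})) = \<phi> (1 - p)"
      using prob_compl[OF complement] by (simp add: p_def)
    also have "\<dots> \<le> p"
      unfolding \<phi>_def p_def by (intro neg_mult_ln_one_minus_le) auto
    also have "\<dots> \<le> sqrt p"
      using measure_nonneg[of M] prob_le_1 unfolding p_def
      by (intro real_le_rsqrt) (simp add: power2_eq_square mult_left_le_one_le)
    finally show ?thesis .
  qed
  have inside: "\<phi> (prob (core_label \<xi> B -` {Some C})) \<le> 2 * sqrt p" for C
  proof -
    have "core_label \<xi> B -` {Some C} \<subseteq> core_complement \<xi> B"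
      by (auto simp: core_label_def split: if_splits)
    then have "prob (core_label \<xi> B -` {Some C}) \<le> p"
      unfolding p_def using complement by (intro finite_measure_mono) auto
    then show ?thesis
      unfolding \<phi>_def using neg_mult_ln_le_two_sqrt[of "prob (core_label \<xi> B -` {Some C})"]
      by (smt (verit) measure_nonneg real_sqrt_le_iff)
  qed
  have "\<H>(core_label \<xi> B)
      = \<phi> (prob (core_label \<xi> B -` {None})) + (\<Sum>C\<in>\<xi>. \<phi> (prob (core_label \<xi> B -` {Some C})))"
    using core_label_range_subset[OF \<open>disjoint \<xi>\<close> \<open>\<Union>\<xi> = UNIV\<close>] \<open>finite \<xi>\<close>
      core_label_finite_range_borel_fibers[OF \<xi> B]
    by (subst entropy_eq_sum_ln[OF simple_function_borel_fibers, of _ "insert None (Some ` \<xi>)"])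
      (auto simp: \<phi>_def sum_negf sum.reindex)
  also have "\<dots> \<le> sqrt p + (\<Sum>C\<in>\<xi>. 2 * sqrt p)"
    using outside inside by (intro add_mono sum_mono)
  also have "\<dots> = (2 * card \<xi> + 1) * sqrt p"
    by (simp add: algebra_simps)
  finally show ?thesis
    unfolding p_def .
qed

lemma obtain_cores_small_entropy:
  assumes \<xi>: "finite_borel_partition \<xi>" and "\<epsilon> > 0"
  obtains B where "\<And>C. C \<in> \<xi> \<Longrightarrow> closed (B C)" "\<And>C. C \<in> \<xi> \<Longrightarrow> B C \<subseteq> C"
    and "\<H>(core_label \<xi> B) \<le> \<epsilon>"
proof -
  have "finite \<xi>" "\<Union>\<xi> = UNIV" and \<xi>_borel: "\<And>C. C \<in> \<xi> \<Longrightarrow> C \<in> sets borel"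
    using \<xi> by (auto simp: finite_borel_partition_def)
  define k where "k = real (card \<xi>)"
  have "k \<ge> 1"
    using \<open>finite \<xi>\<close> \<open>\<Union>\<xi> = UNIV\<close> by (auto simp: k_def Suc_le_eq card_gt_0_iff)
  define \<delta> where "\<delta> = (\<epsilon> / (2 * k + 1))\<^sup>2"
  have "\<delta> / k > 0"
    using \<open>\<epsilon> > 0\<close> \<open>k \<ge> 1\<close> by (simp add: \<delta>_def)
  have "\<forall>C\<in>\<xi>. \<exists>F. closed F \<and> F \<subseteq> C \<and> prob (C - F) < \<delta> / k"
  proof
    fix C assume "C \<in> \<xi>"
    show "\<exists>F. closed F \<and> F \<subseteq> C \<and> prob (C - F) < \<delta> / k"
      by (rule borel_closed_inner_approx[OF finite_measure_axioms sets_M \<xi>_borel[OF \<open>C \<in> \<xi>\<close>] \<open>\<delta> / k > 0\<close>])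
        (intro exI conjI)
  qed
  from bchoice[OF this] obtain B where B: "\<forall>C\<in>\<xi>. closed (B C) \<and> B C \<subseteq> C \<and> prob (C - B C) < \<delta> / k" ..
  have "core_complement \<xi> B \<subseteq> (\<Union>C\<in>\<xi>. C - B C)"
  proof
    fix x assume "x \<in> core_complement \<xi> B"
    moreover obtain C where "C \<in> \<xi>" "x \<in> C"
      using \<open>\<Union>\<xi> = UNIV\<close> by (metis UNIV_I Union_iff)
    ultimately show "x \<in> (\<Union>C\<in>\<xi>. C - B C)"
      unfolding core_complement_def by auto
  qed
  then have "prob (core_complement \<xi> B) \<le> prob (\<Union>C\<in>\<xi>. C - B C)"
    using \<open>finite \<xi>\<close> \<xi>_borel B sets_M by (intro finite_measure_mono) auto
  also have "\<dots> \<le> (\<Sum>C\<in>\<xi>. prob (C - B C))"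
    using \<open>finite \<xi>\<close> \<xi>_borel B sets_M by (intro measure_UNION_le) auto
  also have "\<dots> \<le> (\<Sum>C\<in>\<xi>. \<delta> / k)"
    using B by (intro sum_mono less_imp_le) auto
  also have "\<dots> = \<delta>"
    using \<open>k \<ge> 1\<close> by (simp add: k_def)
  finally have "sqrt (prob (core_complement \<xi> B)) \<le> \<epsilon> / (2 * k + 1)"
    using \<open>\<epsilon> > 0\<close> \<open>k \<ge> 1\<close> by (simp add: \<delta>_def real_le_lsqrt)
  then have "(2 * k + 1) * sqrt (prob (core_complement \<xi> B)) \<le> \<epsilon>"
    using \<open>k \<ge> 1\<close> by (simp add: field_simps)
  then have "\<H>(core_label \<xi> B) \<le> \<epsilon>"
    using entropy_core_label_le[OF \<xi>, of B] B unfolding k_def by (simp add: add.commute)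
  then show thesis
    using B by (intro that) auto
qed

lemma obtain_min_subcover_selection:
  assumes "finite I" "finite_open_cover \<U>" "\<And>i. continuous_on UNIV (g i)"
  defines "J \<equiv> join_fam (\<lambda>i. preimage_coll (g i) \<U>) I"
  obtains \<alpha> where "simple_function M \<alpha>" "\<And>x. \<alpha> x \<in> J \<and> x \<in> \<alpha> x"
    and "\<H>(\<alpha>) \<le> ln (real (min_subcover_card J))"
proof -
  have "finite \<U>" "\<And>U. U \<in> \<U> \<Longrightarrow> open U" "\<Union>\<U> = UNIV"
    using assms(2) by (auto simp: finite_open_cover_def)
  have "finite J"
    unfolding J_def using \<open>finite I\<close> \<open>finite \<U>\<close> by (rule finite_join_fam_preimage)
  moreover have "\<Union>J = UNIV"
    unfolding J_def using \<open>\<Union>\<U> = UNIV\<close> by (rule Union_join_fam_preimage)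
  ultimately obtain \<V> where \<V>: "\<V> \<subseteq> J" "\<Union>\<V> = UNIV" "card \<V> = min_subcover_card J"
    by (rule obtain_min_subcover)
  have "finite \<V>"
    using \<V>(1) \<open>finite J\<close> by (rule finite_subset)
  have "open V" if "V \<in> \<V>" for V
    using \<V>(1) that unfolding J_def
    by (intro open_join_fam_preimage[OF \<open>finite I\<close> \<open>\<And>U. U \<in> \<U> \<Longrightarrow> open U\<close> assms(3)]) auto
  then have "\<V> \<subseteq> sets M"
    using sets_M by auto
  moreover have "space M \<subseteq> \<Union>\<V>"
    using \<V>(2) space_M by simp
  ultimately obtain \<alpha> where \<alpha>: "simple_function M \<alpha>" "\<And>x. x \<in> space M \<Longrightarrow> \<alpha> x \<in> \<V> \<and> x \<in> \<alpha> x"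
    using obtain_simple_function_cover_selection[OF \<open>finite \<V>\<close>] by blast
  have "\<H>(\<alpha>) \<le> log b (real (card \<V>))"
    using \<alpha> \<open>finite \<V>\<close> by (intro entropy_le_card_superset) auto
  then have "\<H>(\<alpha>) \<le> ln (real (min_subcover_card J))"
    by (simp add: \<V>(3) log_def natural_base)
  then show thesis
    using \<alpha> \<V>(1) space_M by (intro that) auto
qed

lemma entropy_core_labels_le:
  assumes \<xi>: "finite_borel_partition \<xi>" and "finite I" and B: "\<And>C. C \<in> \<xi> \<Longrightarrow> closed (B C)"
    and g: "\<And>i. g i \<in> borel_measurable borel" "\<And>i S. S \<in> sets borel \<Longrightarrow> prob (g i -` S) = prob S"
  shows "simple_function M (\<lambda>x. restrict (\<lambda>i. core_label \<xi> B (g i x)) I)"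
    and "\<H>(\<lambda>x. restrict (\<lambda>i. core_label \<xi> B (g i x)) I) \<le> real (card I) * \<H>(core_label \<xi> B)"
proof -
  note labels = core_label_finite_range_borel_fibers[OF \<xi> B]
  show "simple_function M (\<lambda>x. restrict (\<lambda>i. core_label \<xi> B (g i x)) I)"
    using \<open>finite I\<close> labels g(1) by (intro simple_function_restrict simple_function_borel_comp)
  have "\<H>(\<lambda>x. restrict (\<lambda>i. core_label \<xi> B (g i x)) I) \<le> (\<Sum>i\<in>I. \<H>(\<lambda>x. core_label \<xi> B (g i x)))"
    using \<open>finite I\<close> labels g(1) by (intro entropy_restrict_le_sum simple_function_borel_comp)
  also have "\<dots> = real (card I) * \<H>(core_label \<xi> B)"
    using entropy_comp_measure_preserving[OF labels g] by simp
  finally show "\<H>(\<lambda>x. restrict (\<lambda>i. core_label \<xi> B (g i x)) I) \<le> real (card I) * \<H>(core_label \<xi> B)" .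
qed

lemma part_entropy_join_le:
  assumes \<xi>: "finite_borel_partition \<xi>" and "finite I"
    and B: "\<And>C. C \<in> \<xi> \<Longrightarrow> closed (B C)" "\<And>C. C \<in> \<xi> \<Longrightarrow> B C \<subseteq> C"
    and g: "\<And>i. continuous_on UNIV (g i)" "\<And>i S. S \<in> sets borel \<Longrightarrow> prob (g i -` S) = prob S"
  shows "part_entropy M (join_fam (\<lambda>i. preimage_coll (g i) \<xi>) I)
    \<le> ln (real (min_subcover_card (join_fam (\<lambda>i. preimage_coll (g i) (core_cover \<xi> B)) I)))
      + real (card I) * \<H>(core_label \<xi> B)"
proof -
  have "finite \<xi>" "disjoint \<xi>" "\<Union>\<xi> = UNIV" "\<xi> \<noteq> {}"
    using \<xi> by (auto simp: finite_borel_partition_def)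
  have g_borel: "g i \<in> borel_measurable borel" for i
    using g(1) by (rule borel_measurable_continuous_onI)
  define X where "X x = restrict (\<lambda>i. partition_cell \<xi> (g i x)) I" for x
  define Z where "Z x = restrict (\<lambda>i. core_label \<xi> B (g i x)) I" for x
  have cover: "finite_open_cover (core_cover \<xi> B)"
    using \<open>finite \<xi>\<close> \<open>disjoint \<xi>\<close> \<open>\<xi> \<noteq> {}\<close> B by (rule finite_open_cover_core_cover)
  obtain \<alpha> where \<alpha>: "simple_function M \<alpha>"
      "\<And>x. \<alpha> x \<in> join_fam (\<lambda>i. preimage_coll (g i) (core_cover \<xi> B)) I \<and> x \<in> \<alpha> x"
      "\<H>(\<alpha>) \<le> ln (real (min_subcover_card (join_fam (\<lambda>i. preimage_coll (g i) (core_cover \<xi> B)) I)))"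
    using obtain_min_subcover_selection[where g = g, OF \<open>finite I\<close> cover g(1)] by metis
  \<comment> \<open>Inside one member of the subcover, the core labels along the orbit determine the \<xi>-cells.\<close>
  have determined: "X x = X x'" if same: "\<alpha> x = \<alpha> x'" "Z x = Z x'" for x x'
    unfolding X_def
  proof (rule partition_cells_eq_if_core_labels_eq[OF \<open>disjoint \<xi>\<close> \<open>\<Union>\<xi> = UNIV\<close> B(2)])
    show "\<alpha> x \<in> join_fam (\<lambda>i. preimage_coll (g i) (core_cover \<xi> B)) I" "x \<in> \<alpha> x"
      using \<alpha>(2)[of x] by simp_all
    show "x' \<in> \<alpha> x"
      using \<alpha>(2)[of x'] same(1) by simp
    show "core_label \<xi> B (g i x) = core_label \<xi> B (g i x')" if "i \<in> I" for i
      using fun_cong[OF same(2), of i] \<open>i \<in> I\<close> by (simp add: Z_def)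
  qed
  have "simple_function M Z"
    unfolding Z_def by (rule entropy_core_labels_le(1)[OF \<xi> \<open>finite I\<close> B(1) g_borel g(2)])
  with \<alpha>(1) have "\<H>(X) \<le> \<H>(\<alpha>) + \<H>(Z)"
    using determined by (rule entropy_le_of_determined)
  moreover have "\<H>(Z) \<le> real (card I) * \<H>(core_label \<xi> B)"
    unfolding Z_def by (rule entropy_core_labels_le(2)[OF \<xi> \<open>finite I\<close> B(1) g_borel g(2)])
  moreover have "part_entropy M (join_fam (\<lambda>i. preimage_coll (g i) \<xi>) I) = \<H>(X)"
    unfolding X_def by (rule part_entropy_join_eq_entropy[OF \<xi> \<open>finite I\<close> g_borel])
  ultimately show ?thesis
    using \<alpha>(3) by linarith
qed

lemma obtain_open_cover_part_entropy_le:
  assumes \<xi>: "finite_borel_partition \<xi>" and "\<epsilon> > 0"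
    and g: "\<And>i. continuous_on UNIV (g i)" "\<And>i S. S \<in> sets borel \<Longrightarrow> prob (g i -` S) = prob S"
  obtains \<U> where "finite_open_cover \<U>"
    and "\<And>I. finite I \<Longrightarrow> part_entropy M (join_fam (\<lambda>i. preimage_coll (g i) \<xi>) I)
      \<le> ln (real (min_subcover_card (join_fam (\<lambda>i. preimage_coll (g i) \<U>) I))) + real (card I) * \<epsilon>"
proof -
  obtain B where B: "\<And>C. C \<in> \<xi> \<Longrightarrow> closed (B C)" "\<And>C. C \<in> \<xi> \<Longrightarrow> B C \<subseteq> C"
    and small: "\<H>(core_label \<xi> B) \<le> \<epsilon>"
    using obtain_cores_small_entropy[OF \<xi> \<open>\<epsilon> > 0\<close>] by metis
  have "finite_open_cover (core_cover \<xi> B)"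
    using \<xi> B by (intro finite_open_cover_core_cover) (auto simp: finite_borel_partition_def)
  moreover have "part_entropy M (join_fam (\<lambda>i. preimage_coll (g i) \<xi>) I)
      \<le> ln (real (min_subcover_card (join_fam (\<lambda>i. preimage_coll (g i) (core_cover \<xi> B)) I)))
        + real (card I) * \<epsilon>" if "finite I" for I
    using part_entropy_join_le[where g = g, OF \<xi> that B g] mult_left_mono[OF small, of "real (card I)"] by simp
  ultimately show thesis
    by (rule that)
qed

lemma limsup_part_entropy_le_top_seq_entropy:
  assumes \<xi>: "finite_borel_partition \<xi>"
    and f: "\<And>n. continuous_on UNIV (f n)" "\<And>n B. B \<in> sets borel \<Longrightarrow> prob (f n -` B) = prob B"
  shows "limsup (\<lambda>n. ereal (part_entropy M (join_fam (\<lambda>i. preimage_coll (fcomp f 0 (a i)) \<xi>) {1..n}) / real n))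
    \<le> top_seq_entropy a f"
proof (rule ereal_le_epsilon2)
  let ?join = "\<lambda>\<C> n. join_fam (\<lambda>i. preimage_coll (fcomp f 0 (a i)) \<C>) {1..n}"
  fix \<epsilon> :: real assume "0 < \<epsilon>"
  have f_borel: "f n \<in> borel_measurable borel" for n
    using f(1) by (rule borel_measurable_continuous_onI)
  obtain \<U> where "finite_open_cover \<U>" and bound: "\<And>I. finite I \<Longrightarrow>
      part_entropy M (join_fam (\<lambda>i. preimage_coll (fcomp f 0 (a i)) \<xi>) I)
      \<le> ln (real (min_subcover_card (join_fam (\<lambda>i. preimage_coll (fcomp f 0 (a i)) \<U>) I)))
        + real (card I) * \<epsilon>"
    using obtain_open_cover_part_entropy_le[where g = "\<lambda>i. fcomp f 0 (a i)", OF \<xi> \<open>0 < \<epsilon>\<close>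
        continuous_on_fcomp[OF f(1)] measure_vimage_fcomp[OF f_borel f(2)]] by metis
  have "part_entropy M (?join \<xi> n) \<le> ln (real (min_subcover_card (?join \<U> n))) + real n * \<epsilon>" for n
    using bound[of "{1..n}"] by simp
  then have "limsup (\<lambda>n. ereal (part_entropy M (?join \<xi> n) / real n))
      \<le> limsup (\<lambda>n. ereal (ln (real (min_subcover_card (?join \<U> n))) / real n)) + \<epsilon>"
    using \<open>0 < \<epsilon>\<close> by (intro limsup_div_le_add) auto
  also have "\<dots> \<le> top_seq_entropy a f + \<epsilon>"
    unfolding top_seq_entropy_def using \<open>finite_open_cover \<U>\<close> by (intro add_right_mono SUP_upper) simp
  finally show "limsup (\<lambda>n. ereal (part_entropy M (?join \<xi> n) / real n)) \<le> top_seq_entropy a f + \<epsilon>" .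
qed

end

theorem theorem3p7:
  fixes f :: "nat \<Rightarrow> 'a::metric_space \<Rightarrow> 'a"
    and \<mu> :: "'a measure"
    and a :: "nat \<Rightarrow> nat"
  assumes "compact (UNIV :: 'a set)"
    and "finite_covering_dim TYPE('a)"
    and "\<And>n. continuous_on UNIV (f n)"
    and "sets \<mu> = sets borel"
    and "prob_space \<mu>"
    and "\<And>n B. B \<in> sets borel \<Longrightarrow> measure \<mu> (f n -` B) = measure \<mu> B"
    and "strict_mono_on {1..} a"
  shows "top_seq_entropy a f \<ge> meas_seq_entropy a \<mu> f"
proof -
  interpret borel_entropy_space \<mu> "exp 1"
    unfolding borel_entropy_space_def borel_entropy_space_axioms_def
      information_space_def information_space_axioms_def
    using assms(4,5) by simp
  show ?thesis
    unfolding meas_seq_entropy_def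
    using limsup_part_entropy_le_top_seq_entropy[OF _ assms(3,6)] by (auto intro: SUP_least)
qed

end
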